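(* Let $k>t+1$, $n>2k-t$, and let $\mathcal{S}_a$ be a maximal set of $k$-spaces in $\mathrm{AG}(n,q)$ pairwise intersecting in at least a $t$-space. Let $\psi(\mathcal{S}_a)=\min\{\dim T: T\text{ an affine subspace},\ \dim(T\cap\alpha)\geq t\ \forall\alpha\in\mathcal{S}_a\}$ and suppose $\psi(\mathcal{S}_a)=t+x$ with $x\geq 2$. Then for each $j\in\{0,1,\dots,x\}$, the number of elements of $\mathcal{S}_a$ containing any given affine $(t+x-j)$-space is at most $(\theta_{k-t})^j\left[{n-t-x\atop k-t-x}\right]_q$.
   Context: Affine subspaces intersect in at least a $t$-space if their affine intersection has dimension at least $t$. $\left[{n\atop k}\right]_q=\frac{(q^n-1)\cdots(q^{n-k+1}-1)}{(q^k-1)\cdots(q-1)}$ for $k>0$, $=1$ for $k=0$; $\theta_m=\frac{q^{m+1}-1}{q-1}$. Maximal means no further affine $k$-space can be added keeping the property. *)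

theory Defs
  imports "HOL-Analysis.Analysis"
begin

text \<open>AG(n,q) is modelled as the vector space 'a^'n over a finite field 'a,
  with q = CARD('a) and n = CARD('n).\<close>

definition affine_sub :: "('a::field ^ 'n) set \<Rightarrow> bool" where
  "affine_sub S \<longleftrightarrow> (\<exists>p W. vec.subspace W \<and> S = (\<lambda>w. p + w) ` W)"

definition direction :: "('a::field ^ 'n) set \<Rightarrow> ('a ^ 'n) set" where
  "direction S = {x - y | x y. x \<in> S \<and> y \<in> S}"

definition adim :: "('a::field ^ 'n) set \<Rightarrow> nat" where
  "adim S = vec.dim (direction S)"

definition meets_in :: "nat \<Rightarrow> ('a::field ^ 'n) set \<Rightarrow> ('a ^ 'n) set \<Rightarrow> bool" where
  "meets_in t A B \<longleftrightarrow> A \<inter> B \<noteq> {} \<and> adim (A \<inter> B) \<ge> t"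

definition kspace :: "nat \<Rightarrow> ('a::field ^ 'n) set \<Rightarrow> bool" where
  "kspace k S \<longleftrightarrow> affine_sub S \<and> adim S = k"

definition maximal_t_intersecting :: "nat \<Rightarrow> nat \<Rightarrow> ('a::field ^ 'n) set set \<Rightarrow> bool" where
  "maximal_t_intersecting k t F \<longleftrightarrow>
     (\<forall>A\<in>F. kspace k A) \<and>
     (\<forall>A\<in>F. \<forall>B\<in>F. meets_in t A B) \<and>
     (\<forall>B. kspace k B \<and> B \<notin> F \<longrightarrow> \<not> (\<forall>A\<in>F. meets_in t A B))"

definition psi :: "nat \<Rightarrow> ('a::field ^ 'n) set set \<Rightarrow> nat" where
  "psi t F = (LEAST d. \<exists>T. affine_sub T \<and> adim T = d \<and> (\<forall>A\<in>F. meets_in t T A))"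

definition qbinom :: "nat \<Rightarrow> nat \<Rightarrow> nat \<Rightarrow> real" where
  "qbinom q n k = (if k = 0 then 1 else
     (\<Prod>i<k. (real q ^ (n - i) - 1)) / (\<Prod>i<k. (real q ^ (i + 1) - 1)))"

definition theta :: "nat \<Rightarrow> nat \<Rightarrow> real" where
  "theta q m = (real q ^ (m + 1) - 1) / (real q - 1)"

end

theory Submission
  imports Defs
begin

text \<open>Write theta for theta_(k-t). By downward induction on m = adim U one shows that the number
  N(U) of members of F through an affine m-space U satisfies
  N(U) theta^m \<le> theta^psi [n - psi, k - psi]_q.
  For m \<ge> psi, N(U) is at most the number [n - m, k - m]_q of all k-spaces through U, and each
  step down in the Gaussian coefficient costs a factor (q^(n-i) - 1)/(q^(k-i) - 1) \<ge> q^(n-k),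
  which dominates theta because n - k > k - t.
  For m < psi, U meets some B in F in less than a t-space. Every A in F through U meets B in a
  t-space, and this forces direction A to grow by some g \<ge> 1 inside the span L of direction B and
  one vector joining U to B; so A contains one of at most theta^g affine (m+g)-spaces through U,
  to which the induction hypothesis applies.\<close>

section \<open>Gaussian binomial coefficients\<close>

lemma real_power_gt_1: "2 \<le> q \<Longrightarrow> 0 < r \<Longrightarrow> 1 < real q ^ r"
  by (simp add: one_less_power)

lemma qbinom_eq_prod:
  "qbinom q a g = (\<Prod>i<g. (real q ^ (a - i) - 1) / (real q ^ (g - i) - 1))"
proof -
  have "(\<Prod>i<g. real q ^ (g - i) - 1) = (\<Prod>i<g. (\<lambda>j. real q ^ (j + 1) - 1) (g - Suc i))"
    by (rule prod.cong) (auto simp: Suc_diff_Suc)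
  also have "\<dots> = (\<Prod>i<g. real q ^ (i + 1) - 1)"
    by (rule prod.nat_diff_reindex)
  finally show ?thesis
    unfolding qbinom_def by (simp add: prod_dividef)
qed

lemma qbinom_Suc_Suc:
  "qbinom q (Suc a) (Suc g) = (real q ^ Suc a - 1) / (real q ^ Suc g - 1) * qbinom q a g"
  unfolding qbinom_eq_prod prod.lessThan_Suc_shift by simp

lemma qbinom_pos: "2 \<le> q \<Longrightarrow> g \<le> a \<Longrightarrow> 0 < qbinom q a g"
  unfolding qbinom_eq_prod
  by (rule prod_pos) (auto intro!: divide_pos_pos simp: real_power_gt_1)

lemma theta_pos: "2 \<le> q \<Longrightarrow> 0 < theta q c"
  unfolding theta_def using real_power_gt_1[of q "c + 1"] by (auto intro!: divide_pos_pos)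

lemma theta_mono: "2 \<le> q \<Longrightarrow> c \<le> c' \<Longrightarrow> theta q c \<le> theta q c'"
  unfolding theta_def by (auto intro!: divide_right_mono power_increasing)

lemma theta_le_power:
  assumes q: "2 \<le> q"
  shows "theta q c \<le> real q ^ (c + 1)"
proof -
  have "real q ^ (c + 1) * 1 \<le> real q ^ (c + 1) * (real q - 1)"
    using q by (intro mult_left_mono) simp_all
  then have "real q ^ (c + 1) - 1 \<le> real q ^ (c + 1) * (real q - 1)"
    by simp
  then show ?thesis
    using q unfolding theta_def by (simp add: divide_le_eq)
qed

lemma power_quotient_le_theta:
  assumes q: "2 \<le> q" and r: "1 \<le> r"
  shows "(real q ^ (c + r) - 1) / (real q ^ r - 1) \<le> theta q c"
proof -
  define X Y where "X = real q ^ c" and "Y = real q ^ r"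
  have "1 \<le> X" using q by (simp add: X_def)
  moreover have "real q \<le> Y"
    using q r power_increasing[of 1 r "real q"] by (simp add: Y_def)
  ultimately have "0 \<le> (X - 1) * (Y - real q)" by simp
  then have "(X * Y - 1) * (real q - 1) \<le> (X * real q - 1) * (Y - 1)"
    by (simp add: algebra_simps)
  moreover have "1 < Y" "1 < real q" using q r by (simp_all add: Y_def real_power_gt_1)
  ultimately have "(X * Y - 1) / (Y - 1) \<le> (X * real q - 1) / (real q - 1)"
    by (simp add: field_simps)
  then show ?thesis
    unfolding theta_def X_def Y_def by (simp add: power_add mult.commute)
qed

lemma qbinom_le_theta_power:
  assumes q: "2 \<le> q" and "g \<le> a"
  shows "qbinom q a g \<le> theta q (a - g) ^ g"
proof -
  have "qbinom q a g \<le> (\<Prod>i<g. theta q (a - g))"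
    unfolding qbinom_eq_prod
  proof (rule prod_mono, intro conjI)
    fix i assume "i \<in> {..<g}"
    then have i: "i < g" by simp
    then show "0 \<le> (real q ^ (a - i) - 1) / (real q ^ (g - i) - 1)"
      using q by (simp add: real_power_gt_1 less_imp_le)
    have "a - g + (g - i) = a - i" using i \<open>g \<le> a\<close> by arith
    then show "(real q ^ (a - i) - 1) / (real q ^ (g - i) - 1) \<le> theta q (a - g)"
      using power_quotient_le_theta[OF q, of "g - i" "a - g"] i by simp
  qed
  then show ?thesis by simp
qed

lemma qbinom_shift_le:
  assumes q: "2 \<le> q" and "e \<le> K" "K \<le> N" and c: "c + 1 \<le> N - K"
  shows "qbinom q (N - e) (K - e) * theta q c ^ e \<le> qbinom q N K"
  using \<open>e \<le> K\<close>
proof (induction e)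
  case 0
  then show ?case by simp
next
  case (Suc e)
  have e: "e < K" using Suc.prems by simp
  have step: "theta q c \<le> (real q ^ (N - e) - 1) / (real q ^ (K - e) - 1)"
  proof -
    have "theta q c \<le> real q ^ (N - K)"
      using order_trans[OF theta_le_power[OF q] power_increasing[OF c]] q by simp
    then have "theta q c * (real q ^ (K - e) - 1) \<le> real q ^ (N - K) * (real q ^ (K - e) - 1)"
      using q e by (intro mult_right_mono) (simp_all add: one_le_power)
    also have "\<dots> = real q ^ (N - e) - real q ^ (N - K)"
      using e \<open>K \<le> N\<close> by (simp add: right_diff_distrib power_add[symmetric])
    also have "\<dots> \<le> real q ^ (N - e) - 1"
      using q by simp
    finally show ?thesis
      using q e by (simp add: le_divide_eq real_power_gt_1)
  qed
  have unfold: "qbinom q (N - e) (K - e)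
      = (real q ^ (N - e) - 1) / (real q ^ (K - e) - 1) * qbinom q (N - Suc e) (K - Suc e)"
    using qbinom_Suc_Suc[of q "N - Suc e" "K - Suc e"] e \<open>K \<le> N\<close>
    by (simp add: Suc_diff_Suc)
  have "qbinom q (N - Suc e) (K - Suc e) * theta q c ^ Suc e
      = (theta q c * qbinom q (N - Suc e) (K - Suc e)) * theta q c ^ e"
    by simp
  also have "\<dots> \<le> qbinom q (N - e) (K - e) * theta q c ^ e"
    unfolding unfold using step q \<open>K \<le> N\<close>
    by (intro mult_right_mono) (simp_all add: qbinom_pos theta_pos less_imp_le)
  also have "\<dots> \<le> qbinom q N K" using Suc.IH e by simp
  finally show ?case .
qed

section \<open>Affine subspaces\<close>

lemma translate_mem_iff: "x \<in> (\<lambda>w. p + w) ` W \<longleftrightarrow> x - p \<in> W"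
  for p :: "'a::ab_group_add"
  by (auto intro: image_eqI[of x _ "x - p"])

lemma direction_translate:
  fixes W :: "('a::field ^ 'n) set"
  assumes W: "vec.subspace W"
  shows "direction ((\<lambda>w. p + w) ` W) = W"
proof
  show "direction ((\<lambda>w. p + w) ` W) \<subseteq> W"
    unfolding direction_def using vec.subspace_diff[OF W] by auto
  show "W \<subseteq> direction ((\<lambda>w. p + w) ` W)"
  proof
    fix z assume "z \<in> W"
    then have "p + z \<in> (\<lambda>w. p + w) ` W" "p + 0 \<in> (\<lambda>w. p + w) ` W"
      using vec.subspace_0[OF W] by blast+
    then show "z \<in> direction ((\<lambda>w. p + w) ` W)"
      unfolding direction_def by force
  qed
qed

lemma affine_sub_translate: "vec.subspace W \<Longrightarrow> affine_sub ((\<lambda>w. p + w) ` W)"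
  unfolding affine_sub_def by blast

lemma subspace_direction: "affine_sub S \<Longrightarrow> vec.subspace (direction S)"
  unfolding affine_sub_def using direction_translate by metis

lemma affine_sub_nonempty: "affine_sub S \<Longrightarrow> S \<noteq> {}"
  unfolding affine_sub_def using vec.subspace_0 by blast

lemma affine_mem_iff:
  assumes "affine_sub S" "u \<in> S"
  shows "x \<in> S \<longleftrightarrow> x - u \<in> direction S"
proof -
  obtain p W where W: "vec.subspace W" and S: "S = (\<lambda>w. p + w) ` W"
    using assms(1) unfolding affine_sub_def by blast
  have u: "u - p \<in> W" using assms(2) S translate_mem_iff by blast
  have "x - p = (x - u) + (u - p)" "x - u = (x - p) - (u - p)" by simp_all
  then have "x - p \<in> W \<longleftrightarrow> x - u \<in> W"
    using vec.subspace_add[OF W] vec.subspace_diff[OF W] u by metis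
  then show ?thesis
    using S translate_mem_iff direction_translate[OF W] by metis
qed

lemma affine_eq_translate_direction:
  "affine_sub S \<Longrightarrow> u \<in> S \<Longrightarrow> S = (\<lambda>w. u + w) ` direction S"
  using affine_mem_iff translate_mem_iff by blast

lemma direction_mono: "S \<subseteq> T \<Longrightarrow> direction S \<subseteq> direction T"
  unfolding direction_def by blast

lemma adim_mono: "S \<subseteq> T \<Longrightarrow> adim S \<le> adim T"
  unfolding adim_def by (intro vec.dim_subset direction_mono)

lemma direction_Int:
  assumes A: "affine_sub A" and B: "affine_sub B" and "p \<in> A" "p \<in> B"
  shows "direction (A \<inter> B) = direction A \<inter> direction B"
proof -
  have "A \<inter> B = (\<lambda>w. p + w) ` (direction A \<inter> direction B)"
    using affine_mem_iff[OF A \<open>p \<in> A\<close>] affine_mem_iff[OF B \<open>p \<in> B\<close>] translate_mem_iff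
    by blast
  then show ?thesis
    using direction_translate vec.subspace_inter subspace_direction A B by metis
qed

section \<open>Counting subspaces over a finite field\<close>

lemma card_field_ge_2: "2 \<le> CARD('a::{field,finite})"
proof -
  have "card {0::'a, 1} \<le> CARD('a)" by (rule card_mono) simp_all
  then show ?thesis by simp
qed

lemma card_span_independent:
  fixes B :: "('a::{field,finite} ^ 'n) set"
  assumes "vec.independent B"
  shows "card (vec.span B) = CARD('a) ^ card B"
proof -
  have fin: "finite B" by simp
  let ?comb = "\<lambda>u. \<Sum>v\<in>B. u v *s v"
  have span: "vec.span B = ?comb ` (B \<rightarrow>\<^sub>E UNIV)"
  proof
    show "vec.span B \<subseteq> ?comb ` (B \<rightarrow>\<^sub>E UNIV)"
    proof
      fix y assume "y \<in> vec.span B"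
      then obtain u where y: "y = ?comb u" using vec.span_finite[OF fin] by blast
      have "?comb (restrict u B) = y" unfolding y by (rule sum.cong) simp_all
      moreover have "restrict u B \<in> B \<rightarrow>\<^sub>E UNIV" by simp
      ultimately show "y \<in> ?comb ` (B \<rightarrow>\<^sub>E UNIV)" by blast
    qed
    show "?comb ` (B \<rightarrow>\<^sub>E UNIV) \<subseteq> vec.span B"
      using vec.span_finite[OF fin] by blast
  qed
  have "inj_on ?comb (B \<rightarrow>\<^sub>E UNIV)"
  proof (rule inj_onI)
    fix f g assume f: "f \<in> B \<rightarrow>\<^sub>E UNIV" and g: "g \<in> B \<rightarrow>\<^sub>E UNIV" and eq: "?comb f = ?comb g"
    from eq have zero: "(\<Sum>v\<in>B. (f v - g v) *s v) = 0"
      by (simp add: sum_subtractf vector_sub_rdistrib)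
    have "vec.dependent B" if "\<exists>v\<in>B. f v - g v \<noteq> 0"
      unfolding vec.dependent_finite[OF fin]
      by (rule exI[of _ "\<lambda>v. f v - g v"]) (use that zero in simp)
    then have "\<forall>v\<in>B. f v - g v = 0"
      using assms by blast
    then show "f = g" by (intro PiE_ext[OF f g]) simp
  qed
  then have "card (vec.span B) = card (B \<rightarrow>\<^sub>E (UNIV :: 'a set))"
    unfolding span by (rule card_image)
  then show ?thesis by (simp add: card_PiE)
qed

lemma card_subspace:
  fixes S :: "('a::{field,finite} ^ 'n) set"
  assumes "vec.subspace S"
  shows "card S = CARD('a) ^ vec.dim S"
proof -
  obtain B where "B \<subseteq> S" "vec.independent B" "S \<subseteq> vec.span B" "card B = vec.dim S"
    using vec.basis_exists by blast
  moreover from this have "vec.span B = S" using assms vec.span_minimal by blast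
  ultimately show ?thesis using card_span_independent by metis
qed

definition extension_lists :: "('a::field ^ 'n) set \<Rightarrow> ('a ^ 'n) set \<Rightarrow> nat \<Rightarrow> ('a ^ 'n) list set"
  where "extension_lists D L g = {xs. length xs = g \<and> set xs \<subseteq> L \<and>
           (\<forall>i<g. xs ! i \<notin> vec.span (D \<union> set (take i xs)))}"

lemma extension_lists_0: "extension_lists D L 0 = {[]}"
  unfolding extension_lists_def by auto

lemma extension_lists_Suc:
  "extension_lists D L (Suc g) =
     (\<lambda>(xs, v). xs @ [v]) ` (SIGMA xs:extension_lists D L g. L - vec.span (D \<union> set xs))"
  (is "?lhs = ?rhs")
proof
  show "?lhs \<subseteq> ?rhs"
  proof
    fix ys assume ys: "ys \<in> ?lhs"
    then have "length ys = Suc g" by (simp add: extension_lists_def)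
    then obtain xs v where ys_eq: "ys = xs @ [v]" and len: "length xs = g"
      by (metis length_Suc_conv_rev Suc_inject length_append_singleton)
    have prefix: "ys ! i = xs ! i" "take i ys = take i xs" if "i < g" for i
      using that ys_eq len by (simp_all add: nth_append)
    have ys_ext: "\<forall>i<Suc g. ys ! i \<notin> vec.span (D \<union> set (take i ys))" "set ys \<subseteq> L"
      using ys by (simp_all add: extension_lists_def)
    have "xs \<in> extension_lists D L g"
      unfolding extension_lists_def
    proof (intro CollectI conjI allI impI)
      show "length xs = g" "set xs \<subseteq> L" using len ys_ext(2) ys_eq by simp_all
      fix i assume "i < g"
      then show "xs ! i \<notin> vec.span (D \<union> set (take i xs))"
        using ys_ext(1) prefix less_SucI by metis
    qed
    moreover have "v \<in> L - vec.span (D \<union> set xs)"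
    proof -
      have "ys ! g = v" "take g ys = xs" using ys_eq len by (simp_all add: nth_append)
      then show ?thesis using ys_ext ys_eq by (metis Diff_iff lessI in_set_conv_decomp subset_iff)
    qed
    ultimately show "ys \<in> ?rhs"
      unfolding ys_eq by (intro image_eqI[of _ _ "(xs, v)"]) simp_all
  qed
  show "?rhs \<subseteq> ?lhs"
  proof clarify
    fix xs v assume xs: "xs \<in> extension_lists D L g" and v: "v \<in> L" "v \<notin> vec.span (D \<union> set xs)"
    have len: "length xs = g" using xs by (simp add: extension_lists_def)
    have "(xs @ [v]) ! i \<notin> vec.span (D \<union> set (take i (xs @ [v])))" if "i < Suc g" for i
    proof (cases "i < g")
      case True
      then show ?thesis using xs len by (simp add: extension_lists_def nth_append)
    next
      case False
      then show ?thesis using that v len by (simp add: less_Suc_eq nth_append)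
    qed
    then show "xs @ [v] \<in> ?lhs"
      using xs v len by (simp add: extension_lists_def)
  qed
qed

lemma finite_extension_lists:
  fixes D L :: "('a::{field,finite} ^ 'n) set"
  shows "finite (extension_lists D L g)"
  by (rule finite_subset[OF _ finite_lists_length_eq[of UNIV g]]) (auto simp: extension_lists_def)

lemma dim_extension_list:
  "xs \<in> extension_lists D L g \<Longrightarrow> vec.dim (D \<union> set xs) = vec.dim D + g"
proof (induction g arbitrary: xs)
  case 0
  then show ?case by (simp add: extension_lists_0)
next
  case (Suc g)
  then obtain ys v where "xs = ys @ [v]" "ys \<in> extension_lists D L g" "v \<notin> vec.span (D \<union> set ys)"
    unfolding extension_lists_Suc by auto
  then show ?case
    using Suc.IH vec.dim_insert[of v "D \<union> set ys"] by (simp add: Un_insert_right)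
qed

lemma span_extension_list_subset:
  assumes "xs \<in> extension_lists D L g" "D \<subseteq> L" "vec.subspace L"
  shows "vec.span (D \<union> set xs) \<subseteq> L"
  using assms vec.span_minimal[of "D \<union> set xs" L] by (simp add: extension_lists_def)

lemma span_extension_list_eq:
  assumes "xs \<in> extension_lists D M g" "vec.subspace M" "D \<subseteq> M" "vec.dim M = vec.dim D + g"
  shows "vec.span (D \<union> set xs) = M"
proof (rule vec.subspace_dim_equal)
  show "vec.subspace (vec.span (D \<union> set xs))" by (rule vec.subspace_span)
  show "vec.span (D \<union> set xs) \<subseteq> M" by (rule span_extension_list_subset[OF assms(1,3,2)])
  show "vec.dim M \<le> vec.dim (vec.span (D \<union> set xs))"
    using dim_extension_list[OF assms(1)] assms(4) by simp
qed (fact assms(2))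

lemma power_diff_power_eq:
  fixes q :: nat
  assumes "1 \<le> q"
  shows "q ^ l - q ^ e = q ^ e * (q ^ (l - e) - 1)"
proof (cases "e \<le> l")
  case True
  then show ?thesis by (simp add: diff_mult_distrib2 power_add[symmetric])
next
  case False
  then show ?thesis using assms power_increasing[of l e q] by simp
qed

lemma card_extension_lists:
  fixes D L :: "('a::{field,finite} ^ 'n) set"
  assumes "vec.subspace L" "D \<subseteq> L"
  shows "card (extension_lists D L g) =
           (\<Prod>i<g. CARD('a) ^ (vec.dim D + i) * (CARD('a) ^ (vec.dim L - (vec.dim D + i)) - 1))"
proof (induction g)
  case 0
  then show ?case by (simp add: extension_lists_0)
next
  case (Suc g)
  let ?q = "CARD('a)" and ?d = "vec.dim D"
  let ?c = "?q ^ (?d + g) * (?q ^ (vec.dim L - (?d + g)) - 1)"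
  have q: "1 \<le> ?q" using card_field_ge_2 by simp
  have complement: "card (L - vec.span (D \<union> set xs)) = ?c"
    if xs: "xs \<in> extension_lists D L g" for xs
  proof -
    have "card (L - vec.span (D \<union> set xs)) = card L - card (vec.span (D \<union> set xs))"
      using span_extension_list_subset[OF xs assms(2,1)] by (simp add: card_Diff_subset)
    also have "\<dots> = ?q ^ vec.dim L - ?q ^ (?d + g)"
      using card_subspace[OF assms(1)] card_subspace[OF vec.subspace_span[of "D \<union> set xs"]] dim_extension_list[OF xs]
      by simp
    finally show ?thesis using power_diff_power_eq[OF q] by simp
  qed
  have "inj_on (\<lambda>(xs, v). xs @ [v]) (SIGMA xs:extension_lists D L g. L - vec.span (D \<union> set xs))"
    by (rule inj_onI) auto
  then have "card (extension_lists D L (Suc g))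
      = (\<Sum>xs\<in>extension_lists D L g. card (L - vec.span (D \<union> set xs)))"
    unfolding extension_lists_Suc by (simp add: card_image card_SigmaI finite_extension_lists)
  also have "\<dots> = (\<Sum>xs\<in>extension_lists D L g. ?c)"
    by (rule sum.cong[OF refl complement])
  also have "\<dots> = card (extension_lists D L g) * ?c"
    by simp
  finally show ?case using Suc.IH by (simp add: mult.commute)
qed

text \<open>Double counting: each g-dimensional extension of D inside L is spanned by the same number
  of extension lists, and different extensions by disjoint sets of them.\<close>
lemma card_subspaces_between_mult_le:
  fixes D L :: "('a::{field,finite} ^ 'n) set"
  assumes "vec.subspace L" "D \<subseteq> L"
  shows "card {M. vec.subspace M \<and> D \<subseteq> M \<and> M \<subseteq> L \<and> vec.dim M = vec.dim D + g}
           * (\<Prod>i<g. CARD('a) ^ (vec.dim D + i) * (CARD('a) ^ (g - i) - 1))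
         \<le> (\<Prod>i<g. CARD('a) ^ (vec.dim D + i) * (CARD('a) ^ (vec.dim L - (vec.dim D + i)) - 1))"
proof -
  define MM where "MM = {M. vec.subspace M \<and> D \<subseteq> M \<and> M \<subseteq> L \<and> vec.dim M = vec.dim D + g}"
  define c where "c = (\<Prod>i<g. CARD('a) ^ (vec.dim D + i) * (CARD('a) ^ (g - i) - 1))"
  have fibre: "card (extension_lists D M g) = c" if "M \<in> MM" for M
    using card_extension_lists[where L = M and D = D and g = g] that unfolding MM_def c_def by simp
  have disjoint: "\<forall>M\<in>MM. \<forall>M'\<in>MM. M \<noteq> M' \<longrightarrow> extension_lists D M g \<inter> extension_lists D M' g = {}"
  proof (intro ballI impI)
    fix M M' assume M: "M \<in> MM" and M': "M' \<in> MM" and "M \<noteq> M'"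
    have "vec.span (D \<union> set xs) = M" "vec.span (D \<union> set xs) = M'"
      if "xs \<in> extension_lists D M g" "xs \<in> extension_lists D M' g" for xs
      using span_extension_list_eq[OF that(1)] span_extension_list_eq[OF that(2)] M M'
      unfolding MM_def by simp_all
    then show "extension_lists D M g \<inter> extension_lists D M' g = {}"
      using \<open>M \<noteq> M'\<close> by blast
  qed
  have "card MM * c = (\<Sum>M\<in>MM. card (extension_lists D M g))"
    by (simp add: fibre)
  also have "\<dots> = card (\<Union>M\<in>MM. extension_lists D M g)"
    by (rule card_UN_disjoint[OF _ _ disjoint, symmetric]) (simp_all add: finite_extension_lists)
  also have "\<dots> \<le> card (extension_lists D L g)"
    by (rule card_mono[OF finite_extension_lists]) (auto simp: MM_def extension_lists_def)
  also have "\<dots> = (\<Prod>i<g. CARD('a) ^ (vec.dim D + i) * (CARD('a) ^ (vec.dim L - (vec.dim D + i)) - 1))"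
    by (rule card_extension_lists[OF assms])
  finally show ?thesis unfolding MM_def c_def .
qed

lemma card_subspaces_between_le_qbinom:
  fixes D L :: "('a::{field,finite} ^ 'n) set"
  assumes "vec.subspace L" "D \<subseteq> L"
  shows "real (card {M. vec.subspace M \<and> D \<subseteq> M \<and> M \<subseteq> L \<and> vec.dim M = vec.dim D + g})
           \<le> qbinom CARD('a) (vec.dim L - vec.dim D) g"
proof -
  let ?q = "CARD('a)" and ?d = "vec.dim D" and ?l = "vec.dim L"
  let ?c = "card {M. vec.subspace M \<and> D \<subseteq> M \<and> M \<subseteq> L \<and> vec.dim M = vec.dim D + g}"
  let ?P = "\<Prod>i<g. ?q ^ (?d + i)"
  have q: "2 \<le> ?q" by (rule card_field_ge_2)
  have "?c * (?P * (\<Prod>i<g. ?q ^ (g - i) - 1)) \<le> ?P * (\<Prod>i<g. ?q ^ (?l - (?d + i)) - 1)"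
    using card_subspaces_between_mult_le[OF assms, of g] by (simp add: prod.distrib)
  then have "?P * (?c * (\<Prod>i<g. ?q ^ (g - i) - 1)) \<le> ?P * (\<Prod>i<g. ?q ^ (?l - (?d + i)) - 1)"
    by (simp only: mult.left_commute)
  moreover have "0 < ?P" using q by (simp add: prod_pos)
  ultimately have "?c * (\<Prod>i<g. ?q ^ (g - i) - 1) \<le> (\<Prod>i<g. ?q ^ (?l - (?d + i)) - 1)"
    by (rule mult_le_cancel1[THEN iffD1, THEN mp])
  then have "real ?c * (\<Prod>i<g. real (?q ^ (g - i) - 1)) \<le> (\<Prod>i<g. real (?q ^ (?l - (?d + i)) - 1))"
    by (simp only: of_nat_prod[symmetric] of_nat_mult[symmetric] of_nat_le_iff)
  moreover have pow: "real (?q ^ r - 1) = real ?q ^ r - 1" for r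
    using q by (simp add: of_nat_diff one_le_power)
  ultimately have "real ?c * (\<Prod>i<g. real ?q ^ (g - i) - 1) \<le> (\<Prod>i<g. real ?q ^ (?l - (?d + i)) - 1)"
    by (simp only: pow)
  moreover have "0 < (\<Prod>i<g. real ?q ^ (g - i) - 1)"
    using q by (intro prod_pos) (simp add: real_power_gt_1)
  ultimately show ?thesis
    unfolding qbinom_eq_prod by (simp add: prod_dividef le_divide_eq)
qed

lemma card_subspaces_between_le_theta:
  fixes D L :: "('a::{field,finite} ^ 'n) set"
  assumes "vec.subspace L" "D \<subseteq> L"
  shows "real (card {M. vec.subspace M \<and> D \<subseteq> M \<and> M \<subseteq> L \<and> vec.dim M = vec.dim D + g})
           \<le> theta CARD('a) (vec.dim L - vec.dim D - g) ^ g"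
proof (cases "vec.dim D + g \<le> vec.dim L")
  case True
  have "real (card {M. vec.subspace M \<and> D \<subseteq> M \<and> M \<subseteq> L \<and> vec.dim M = vec.dim D + g})
      \<le> qbinom CARD('a) (vec.dim L - vec.dim D) g"
    by (rule card_subspaces_between_le_qbinom[OF assms])
  also have "\<dots> \<le> theta CARD('a) (vec.dim L - vec.dim D - g) ^ g"
    using True by (intro qbinom_le_theta_power card_field_ge_2) simp
  finally show ?thesis .
next
  case False
  then have "{M. vec.subspace M \<and> D \<subseteq> M \<and> M \<subseteq> L \<and> vec.dim M = vec.dim D + g} = {}"
    by (auto dest: vec.dim_subset)
  moreover have "0 \<le> theta CARD('a) (vec.dim L - vec.dim D - g) ^ g"
    using theta_pos[OF card_field_ge_2[where 'a = 'a]] by (simp add: less_imp_le)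
  ultimately show ?thesis
    by (simp only: card.empty of_nat_0)
qed

lemma subspace_between_exists:
  fixes X Y :: "('a::field ^ 'n) set"
  assumes X: "vec.subspace X" and Y: "vec.subspace Y" and "X \<subseteq> Y" "vec.dim X + j \<le> vec.dim Y"
  shows "\<exists>Z. vec.subspace Z \<and> X \<subseteq> Z \<and> Z \<subseteq> Y \<and> vec.dim Z = vec.dim X + j"
  using assms(4)
proof (induction j)
  case 0
  show ?case using X \<open>X \<subseteq> Y\<close> by (intro exI[of _ X]) simp
next
  case (Suc j)
  then obtain Z where Z: "vec.subspace Z" "X \<subseteq> Z" "Z \<subseteq> Y" "vec.dim Z = vec.dim X + j"
    by auto
  have "\<not> Y \<subseteq> Z"
  proof
    assume "Y \<subseteq> Z"
    then have "vec.dim Y \<le> vec.dim Z" by (rule vec.dim_subset)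
    then show False using Z(4) Suc.prems by simp
  qed
  then obtain y where y: "y \<in> Y" "y \<notin> Z" by blast
  have "y \<notin> vec.span Z" using y(2) Z(1) by (simp add: vec.span_eq_iff[THEN iffD2])
  then have "vec.dim (vec.span (insert y Z)) = vec.dim X + Suc j"
    using Z(4) by (simp add: vec.dim_insert)
  moreover have "X \<subseteq> vec.span (insert y Z)" using Z(2) vec.span_superset by blast
  moreover have "vec.span (insert y Z) \<subseteq> Y" using Z(3) y(1) Y vec.span_minimal by blast
  ultimately show ?case using vec.subspace_span by blast
qed

section \<open>Covering the k-spaces that meet a given k-space\<close>

lemma dim_less_of_insert_subset:
  fixes S T :: "('a::field ^ 'n) set"
  assumes "vec.subspace S" "insert w S \<subseteq> T" "w \<notin> S"
  shows "vec.dim S < vec.dim T"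
proof -
  have "w \<notin> vec.span S" using assms(1,3) by (simp add: vec.span_eq_iff[THEN iffD2])
  then have "vec.dim (insert w S) = vec.dim S + 1" by (simp add: vec.dim_insert)
  then show ?thesis using vec.dim_subset[OF assms(2)] by simp
qed

lemma translate_subset_affine:
  assumes "affine_sub A" "u \<in> A" "W \<subseteq> direction A"
  shows "(\<lambda>w. u + w) ` W \<subseteq> A"
  using affine_eq_translate_direction[OF assms(1,2)] assms(3) by blast

text \<open>If U meets B, u0 lies in both, L = direction B, and direction A \<inter> L comes from the
  t-space A \<inter> B. Otherwise, for p in A \<inter> B the vector p - u0 lies in direction A \<inter> L but
  neither in direction U nor in direction B, while dim L = adim B + 1.\<close>
lemma dim_direction_Int_span_bounds:
  fixes U A B :: "('a::field ^ 'n) set"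
  assumes U: "affine_sub U" "u0 \<in> U" and A: "affine_sub A" "U \<subseteq> A"
    and B: "affine_sub B" "b \<in> B" and u0: "U \<inter> B \<noteq> {} \<Longrightarrow> u0 \<in> B"
    and AB: "meets_in t A B" and UB: "\<not> meets_in t U B"
  defines "L \<equiv> vec.span (insert (b - u0) (direction B))"
  shows "vec.dim (direction U \<inter> L) < vec.dim (direction A \<inter> L) \<and>
         t + vec.dim L \<le> vec.dim (direction A \<inter> L) + adim B"
proof -
  obtain p where p: "p \<in> A" "p \<in> B" using AB unfolding meets_in_def by blast
  have t_AB: "t \<le> vec.dim (direction A \<inter> direction B)"
    using AB direction_Int[OF A(1) B(1) p] unfolding meets_in_def adim_def by simp
  have DU_DA: "direction U \<subseteq> direction A" by (rule direction_mono[OF A(2)])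
  have L: "vec.subspace L" unfolding L_def by (rule vec.subspace_span)
  have EL: "direction B \<subseteq> L" unfolding L_def using vec.span_superset by blast
  show ?thesis
  proof (cases "U \<inter> B = {}")
    case False
    then have "u0 \<in> B" by (rule u0)
    then have "b - u0 \<in> direction B" using B(2) unfolding direction_def by blast
    then have L_eq: "L = direction B"
      unfolding L_def using subspace_direction[OF B(1)] by (simp add: insert_absorb vec.span_eq_iff)
    have "adim (U \<inter> B) < t" using UB False unfolding meets_in_def by simp
    then have "vec.dim (direction U \<inter> direction B) < t"
      using direction_Int[OF U(1) B(1) U(2) \<open>u0 \<in> B\<close>] unfolding adim_def by simp
    then show ?thesis using t_AB unfolding L_eq adim_def by simp
  next
    case True
    define w where "w = p - u0"
    have w_A: "w \<in> direction A" unfolding w_def direction_def using p(1) U(2) A(2) by blast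
    have "p - b \<in> L" using EL p(2) B(2) unfolding direction_def by blast
    moreover have "b - u0 \<in> L" unfolding L_def by (simp add: vec.span_base)
    ultimately have "(p - b) + (b - u0) \<in> L" by (rule vec.subspace_add[OF L])
    then have w_L: "w \<in> L" unfolding w_def by simp
    have w_B: "w \<notin> direction B"
    proof
      assume "w \<in> direction B"
      then have "u0 - p \<in> direction B"
        using vec.subspace_neg[OF subspace_direction[OF B(1)]] unfolding w_def by fastforce
      then show False using affine_mem_iff[OF B(1) p(2)] True U(2) by blast
    qed
    have w_U: "w \<notin> direction U"
      using affine_mem_iff[OF U] True p(2) unfolding w_def by blast
    have "vec.dim (direction U \<inter> L) < vec.dim (direction A \<inter> L)"
      using w_A w_L w_U DU_DA
      by (intro dim_less_of_insert_subset vec.subspace_inter subspace_direction U(1) L) auto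
    moreover have "vec.dim (direction A \<inter> direction B) < vec.dim (direction A \<inter> L)"
      using w_A w_L w_B EL
      by (intro dim_less_of_insert_subset vec.subspace_inter subspace_direction A(1) B(1)) auto
    moreover have "vec.dim L \<le> adim B + 1"
      unfolding L_def adim_def by (simp add: vec.dim_insert)
    ultimately show ?thesis using t_AB by linarith
  qed
qed

lemma kspaces_through_meeting_covered:
  fixes U B :: "('a::{field,finite} ^ 'n) set"
  assumes U: "affine_sub U" and B: "kspace k B" and UB: "\<not> meets_in t U B"
  obtains g :: nat and \<V> :: "('a ^ 'n) set set"
  where "1 \<le> g" "real (card \<V>) \<le> theta CARD('a) (k - t) ^ g"
    "\<And>V. V \<in> \<V> \<Longrightarrow> affine_sub V \<and> adim V = adim U + g"
    "\<And>A. kspace k A \<Longrightarrow> U \<subseteq> A \<Longrightarrow> meets_in t A B \<Longrightarrow> \<exists>V\<in>\<V>. V \<subseteq> A"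
proof -
  have B_aff: "affine_sub B" and B_dim: "adim B = k" using B unfolding kspace_def by auto
  obtain u0 where u0: "u0 \<in> U" "U \<inter> B \<noteq> {} \<Longrightarrow> u0 \<in> B"
    using affine_sub_nonempty[OF U] by blast
  obtain b where b: "b \<in> B" using affine_sub_nonempty[OF B_aff] by blast
  define L where "L = vec.span (insert (b - u0) (direction B))"
  define X where "X = direction U \<inter> L"
  define g where "g = max 1 (t + vec.dim L - k - vec.dim X)"
  define MM where "MM = {M. vec.subspace M \<and> X \<subseteq> M \<and> M \<subseteq> L \<and> vec.dim M = vec.dim X + g}"
  define V where "V M = (\<lambda>v. u0 + v) ` {x + y | x y. x \<in> direction U \<and> y \<in> M}" for M
  have L: "vec.subspace L" unfolding L_def by (rule vec.subspace_span)
  have X: "vec.subspace X" unfolding X_def by (intro vec.subspace_inter subspace_direction U L)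
  show ?thesis
  proof (rule that[of g "V ` MM"])
    show "1 \<le> g" unfolding g_def by simp
    have "real (card (V ` MM)) \<le> real (card MM)" by (simp add: card_image_le)
    also have "\<dots> \<le> theta CARD('a) (vec.dim L - vec.dim X - g) ^ g"
      unfolding MM_def by (rule card_subspaces_between_le_theta[OF L]) (simp add: X_def)
    also have "\<dots> \<le> theta CARD('a) (k - t) ^ g"
      by (intro power_mono theta_mono card_field_ge_2 less_imp_le[OF theta_pos]) (simp add: g_def)
    finally show "real (card (V ` MM)) \<le> theta CARD('a) (k - t) ^ g" .
  next
    fix W assume "W \<in> V ` MM"
    then obtain M where "M \<in> MM" and W: "W = V M" by blast
    then have M: "vec.subspace M" "vec.dim M = vec.dim X + g" and "direction U \<inter> M = X"
      unfolding MM_def X_def by auto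
    have sums: "vec.subspace {x + y | x y. x \<in> direction U \<and> y \<in> M}"
      by (intro vec.subspace_sums subspace_direction U M(1))
    have "vec.dim {x + y | x y. x \<in> direction U \<and> y \<in> M} + vec.dim (direction U \<inter> M)
        = vec.dim (direction U) + vec.dim M"
      by (rule vec.dim_sums_Int[OF subspace_direction[OF U] M(1)])
    then show "affine_sub W \<and> adim W = adim U + g"
      unfolding W V_def adim_def direction_translate[OF sums]
      using affine_sub_translate[OF sums] \<open>direction U \<inter> M = X\<close> M(2) by simp
  next
    fix A assume A: "kspace k A" "U \<subseteq> A" "meets_in t A B"
    have A_aff: "affine_sub A" using A(1) unfolding kspace_def by simp
    have A_L: "vec.subspace (direction A \<inter> L)"
      by (intro vec.subspace_inter subspace_direction A_aff L)
    have "vec.dim X < vec.dim (direction A \<inter> L) \<and> t + vec.dim L \<le> vec.dim (direction A \<inter> L) + k"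
      using dim_direction_Int_span_bounds[OF U u0(1) A_aff A(2) B_aff b u0(2) A(3) UB] B_dim
      unfolding X_def L_def by simp
    then have "vec.dim X + g \<le> vec.dim (direction A \<inter> L)" unfolding g_def by linarith
    moreover have "X \<subseteq> direction A \<inter> L" unfolding X_def using direction_mono[OF A(2)] by blast
    ultimately obtain M where M: "vec.subspace M" "X \<subseteq> M" "M \<subseteq> direction A \<inter> L"
        "vec.dim M = vec.dim X + g"
      using subspace_between_exists[OF X A_L] by blast
    then have "M \<in> MM" unfolding MM_def by blast
    moreover have "V M \<subseteq> A"
      unfolding V_def
    proof (rule translate_subset_affine[OF A_aff])
      show "u0 \<in> A" using u0(1) A(2) by blast
      show "{x + y | x y. x \<in> direction U \<and> y \<in> M} \<subseteq> direction A"
        using direction_mono[OF A(2)] M(3) vec.subspace_add[OF subspace_direction[OF A_aff]] by blast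
    qed
    ultimately show "\<exists>W\<in>V ` MM. W \<subseteq> A" by blast
  qed
qed

lemma psi_le_adim: "affine_sub T \<Longrightarrow> \<forall>A\<in>F. meets_in t T A \<Longrightarrow> psi t F \<le> adim T"
  unfolding psi_def by (rule Least_le) blast

lemma card_kspaces_through_le_qbinom:
  fixes F :: "('a::{field,finite} ^ 'n) set set"
  assumes F: "\<forall>A\<in>F. kspace k A" and U: "affine_sub U" and "adim U \<le> k"
  shows "real (card {A\<in>F. U \<subseteq> A}) \<le> qbinom CARD('a) (CARD('n) - adim U) (k - adim U)"
proof -
  obtain u0 where u0: "u0 \<in> U" using affine_sub_nonempty[OF U] by blast
  define MM where "MM = {M. vec.subspace M \<and> direction U \<subseteq> M \<and> M \<subseteq> UNIV \<and>
                           vec.dim M = vec.dim (direction U) + (k - adim U)}"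
  have "inj_on direction {A\<in>F. U \<subseteq> A}"
  proof (rule inj_onI)
    fix A A' assume "A \<in> {A\<in>F. U \<subseteq> A}" "A' \<in> {A\<in>F. U \<subseteq> A}" "direction A = direction A'"
    moreover from this have "affine_sub A" "affine_sub A'" "u0 \<in> A" "u0 \<in> A'"
      using F u0 unfolding kspace_def by auto
    ultimately show "A = A'" using affine_eq_translate_direction by metis
  qed
  moreover have "direction A \<in> MM" if "A \<in> F" "U \<subseteq> A" for A
    using that F subspace_direction[of A] direction_mono[OF that(2)] \<open>adim U \<le> k\<close>
    unfolding MM_def kspace_def adim_def by auto
  then have "direction ` {A\<in>F. U \<subseteq> A} \<subseteq> MM" by blast
  ultimately have "real (card {A\<in>F. U \<subseteq> A}) \<le> real (card MM)"
    by (simp add: card_inj_on_le)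
  also have "\<dots> \<le> qbinom CARD('a) (vec.dim (UNIV :: ('a ^ 'n) set) - vec.dim (direction U)) (k - adim U)"
    unfolding MM_def by (rule card_subspaces_between_le_qbinom) simp_all
  finally show ?thesis by (simp add: card_cart_basis adim_def)
qed

section \<open>Members of a t-intersecting family through a subspace\<close>

lemma card_through_mult_theta_power_le_of_ge:
  fixes F :: "('a::{field,finite} ^ 'n) set set"
  assumes F: "\<forall>A\<in>F. kspace k A" and n: "k + (k - t) < CARD('n)"
    and U: "affine_sub U" and "P \<le> adim U" "adim U \<le> k"
  shows "real (card {A\<in>F. U \<subseteq> A}) * theta CARD('a) (k - t) ^ adim U
           \<le> theta CARD('a) (k - t) ^ P * qbinom CARD('a) (CARD('n) - P) (k - P)"
proof -
  let ?q = "CARD('a)" and ?n = "CARD('n)" and ?\<theta> = "theta CARD('a) (k - t)" and ?m = "adim U"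
  let ?N = "real (card {A\<in>F. U \<subseteq> A})"
  have q: "2 \<le> ?q" by (rule card_field_ge_2)
  have \<theta>: "0 \<le> ?\<theta>" by (rule less_imp_le[OF theta_pos[OF q]])
  have shift: "?n - P - (?m - P) = ?n - ?m" "k - P - (?m - P) = k - ?m"
    using assms(4,5) n by auto
  have "?N * ?\<theta> ^ ?m = ?N * ?\<theta> ^ (?m - P) * ?\<theta> ^ P"
    using assms(4) by (simp add: power_add[symmetric] mult.assoc)
  also have "\<dots> \<le> qbinom ?q (?n - ?m) (k - ?m) * ?\<theta> ^ (?m - P) * ?\<theta> ^ P"
    using card_kspaces_through_le_qbinom[OF F U \<open>?m \<le> k\<close>] \<theta>
    by (intro mult_right_mono) simp_all
  also have "\<dots> \<le> qbinom ?q (?n - P) (k - P) * ?\<theta> ^ P"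
    using qbinom_shift_le[OF q, of "?m - P" "k - P" "?n - P" "k - t"] assms(4,5) n \<theta>
    by (intro mult_right_mono) (simp_all add: shift)
  finally show ?thesis by (simp only: mult.commute)
qed

lemma card_through_mult_theta_power_le_step:
  fixes F :: "('a::{field,finite} ^ 'n) set set"
  assumes F: "\<forall>A\<in>F. kspace k A" and FF: "\<forall>A\<in>F. \<forall>B\<in>F. meets_in t A B"
    and U: "affine_sub U" and not_all: "\<not> (\<forall>A\<in>F. meets_in t U A)" and R: "0 \<le> R"
    and IH: "\<And>V. affine_sub V \<Longrightarrow> adim U < adim V \<Longrightarrow>
               real (card {A\<in>F. V \<subseteq> A}) * theta CARD('a) (k - t) ^ adim V \<le> R"
  shows "real (card {A\<in>F. U \<subseteq> A}) * theta CARD('a) (k - t) ^ adim U \<le> R"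
proof -
  let ?\<theta> = "theta CARD('a) (k - t)" and ?N = "\<lambda>V. card {A\<in>F. V \<subseteq> A}"
  have \<theta>: "0 < ?\<theta>" by (rule theta_pos[OF card_field_ge_2])
  obtain B where B: "B \<in> F" "\<not> meets_in t U B" using not_all by blast
  then have "kspace k B" using F by blast
  show ?thesis
  proof (rule kspaces_through_meeting_covered[OF U \<open>kspace k B\<close> B(2)])
    fix g :: nat and \<V> :: "('a ^ 'n) set set"
    assume g: "1 \<le> g" and card_\<V>: "real (card \<V>) \<le> ?\<theta> ^ g"
      and \<V>: "\<And>V. V \<in> \<V> \<Longrightarrow> affine_sub V \<and> adim V = adim U + g"
      and cover: "\<And>A. kspace k A \<Longrightarrow> U \<subseteq> A \<Longrightarrow> meets_in t A B \<Longrightarrow> \<exists>V\<in>\<V>. V \<subseteq> A"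
    have "{A\<in>F. U \<subseteq> A} \<subseteq> (\<Union>V\<in>\<V>. {A\<in>F. V \<subseteq> A})"
    proof
      fix A assume "A \<in> {A\<in>F. U \<subseteq> A}"
      then have "A \<in> F" "U \<subseteq> A" by simp_all
      then obtain V where "V \<in> \<V>" "V \<subseteq> A" using cover[of A] F FF B(1) by blast
      then show "A \<in> (\<Union>V\<in>\<V>. {A\<in>F. V \<subseteq> A})" using \<open>A \<in> F\<close> by blast
    qed
    then have "?N U \<le> card (\<Union>V\<in>\<V>. {A\<in>F. V \<subseteq> A})"
      by (rule card_mono[rotated]) simp
    also have "\<dots> \<le> (\<Sum>V\<in>\<V>. ?N V)"
      by (rule card_UN_le) simp
    finally have "real (?N U) \<le> (\<Sum>V\<in>\<V>. real (?N V))"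
      by (simp only: of_nat_sum[symmetric] of_nat_le_iff)
    then have "real (?N U) * ?\<theta> ^ (adim U + g) \<le> (\<Sum>V\<in>\<V>. real (?N V)) * ?\<theta> ^ (adim U + g)"
      using \<theta> by (intro mult_right_mono) simp_all
    also have "\<dots> = (\<Sum>V\<in>\<V>. real (?N V) * ?\<theta> ^ (adim U + g))"
      by (rule sum_distrib_right)
    also have "\<dots> \<le> (\<Sum>V\<in>\<V>. R)"
    proof (rule sum_mono)
      fix V assume "V \<in> \<V>"
      then have "affine_sub V" "adim V = adim U + g" using \<V> by auto
      then show "real (?N V) * ?\<theta> ^ (adim U + g) \<le> R" using IH[of V] g by simp
    qed
    also have "\<dots> = real (card \<V>) * R" by simp
    also have "\<dots> \<le> ?\<theta> ^ g * R" using card_\<V> R by (rule mult_right_mono)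
    finally have "(real (?N U) * ?\<theta> ^ adim U) * ?\<theta> ^ g \<le> R * ?\<theta> ^ g"
      by (simp add: power_add mult_ac)
    then show ?thesis using \<theta> by (simp add: mult_le_cancel_right_pos)
  qed
qed

lemma card_through_mult_theta_power_le:
  fixes F :: "('a::{field,finite} ^ 'n) set set"
  assumes F: "\<forall>A\<in>F. kspace k A" and FF: "\<forall>A\<in>F. \<forall>B\<in>F. meets_in t A B"
    and n: "k + (k - t) < CARD('n)" and U: "affine_sub U"
  shows "real (card {A\<in>F. U \<subseteq> A}) * theta CARD('a) (k - t) ^ adim U
           \<le> theta CARD('a) (k - t) ^ psi t F * qbinom CARD('a) (CARD('n) - psi t F) (k - psi t F)"
    (is "_ \<le> ?R")
  using U
proof (induction "k + 1 - adim U" arbitrary: U rule: less_induct)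
  case less
  have "0 < theta CARD('a) (k - t)" by (rule theta_pos[OF card_field_ge_2])
  moreover have "0 < qbinom CARD('a) (CARD('n) - psi t F) (k - psi t F)"
    using n by (intro qbinom_pos card_field_ge_2) simp
  ultimately have R: "0 \<le> ?R" by (metis less_imp_le mult_nonneg_nonneg zero_le_power)
  show ?case
  proof (cases "{A\<in>F. U \<subseteq> A} = {}")
    case True
    then show ?thesis using R by (simp only: card.empty of_nat_0 mult_zero_left)
  next
    case False
    then obtain A where "A \<in> F" "U \<subseteq> A" by auto
    then have "adim U \<le> k" using adim_mono[of U A] F unfolding kspace_def by auto
    show ?thesis
    proof (cases "psi t F \<le> adim U")
      case True
      then show ?thesis
        by (rule card_through_mult_theta_power_le_of_ge[OF F n less.prems _ \<open>adim U \<le> k\<close>])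
    next
      case False
      then have "\<not> (\<forall>A\<in>F. meets_in t U A)" using psi_le_adim[OF less.prems] by auto
      then show ?thesis
      proof (rule card_through_mult_theta_power_le_step[OF F FF less.prems _ R])
        fix V :: "('a ^ 'n) set" assume "affine_sub V" "adim U < adim V"
        moreover from this have "k + 1 - adim V < k + 1 - adim U"
          using \<open>adim U \<le> k\<close> by arith
        ultimately show "real (card {A\<in>F. V \<subseteq> A}) * theta CARD('a) (k - t) ^ adim V \<le> ?R"
          using less.hyps by blast
      qed
    qed
  qed
qed

theorem mainTheorem12:
  fixes F :: "('a::{field,finite} ^ 'n) set set"
    and k t x :: nat
  assumes "k > t + 1"
    and "CARD('n) > 2 * k - t"
    and "maximal_t_intersecting k t F"
    and "psi t F = t + x"
    and "x \<ge> 2"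
  shows "\<forall>j \<le> x. \<forall>U :: ('a ^ 'n) set. affine_sub U \<and> adim U = t + x - j \<longrightarrow>
           real (card {A \<in> F. U \<subseteq> A})
             \<le> theta CARD('a) (k - t) ^ j * qbinom CARD('a) (CARD('n) - t - x) (k - t - x)"
proof (intro allI impI, elim conjE)
  fix j :: nat and U :: "('a ^ 'n) set"
  assume "j \<le> x" and U: "affine_sub U" and dim_U: "adim U = t + x - j"
  let ?\<theta> = "theta CARD('a) (k - t)" and ?Q = "qbinom CARD('a) (CARD('n) - t - x) (k - t - x)"
  have F: "\<forall>A\<in>F. kspace k A" and FF: "\<forall>A\<in>F. \<forall>B\<in>F. meets_in t A B"
    using assms(3) unfolding maximal_t_intersecting_def by blast+
  have n: "k + (k - t) < CARD('n)" using assms(1,2) by linarith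
  have "real (card {A\<in>F. U \<subseteq> A}) * ?\<theta> ^ (t + x - j) \<le> ?\<theta> ^ (t + x) * ?Q"
    using card_through_mult_theta_power_le[OF F FF n U] assms(4) dim_U by simp
  also have "\<dots> = ?\<theta> ^ (t + x - j) * (?\<theta> ^ j * ?Q)"
    using \<open>j \<le> x\<close> by (simp add: power_add[symmetric] mult.assoc)
  finally show "real (card {A\<in>F. U \<subseteq> A}) \<le> ?\<theta> ^ j * ?Q"
    using theta_pos[OF card_field_ge_2[where 'a = 'a]] by (simp add: mult.commute mult_le_cancel_left_pos)
qed

end
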